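(* Let $a\in\mathbb{R}$, $b\in(a,\infty)$, $h\in\mathbb{N}$, $v_1,\dots,v_h,w_1,\dots,w_h\in(0,\infty)$, let $f,p\in C(\mathbb{R},\mathbb{R})$ satisfy for all $x\in\mathbb{R}$ that $p(x)\ge0$ and $p^{-1}((0,\infty))=(a,b)$, with $\mathcal{N}^\theta$, $\mathcal{L}$, $I_i^\theta$, $\operatorname{Lip}$ as in the context. Assume that $f$ is non-decreasing and satisfies $\operatorname{Lip}(f)<\min_{i\in\{1,\dots,h\}}v_iw_i$, let $\vartheta\in\mathbb{R}^{h+1}$ satisfy $(\nabla\mathcal{L})(\vartheta)=0$, and let $V=\sup_{x\in(a,b)}\sum_{j\in\{1,\dots,h\},\,x\in I_j^\vartheta}v_j$. Then (i) for all $j\in\{1,\dots,h\}$, $x\in I_j^\vartheta$ it holds that $|\mathcal{N}^\vartheta(x)-f(x)|\le V$; (ii) for all $j,k\in\{1,\dots,h\}$ with $I_j^\vartheta\neq\emptyset\neq I_k^\vartheta$ and all $x\in[\sup I_j^\vartheta,\inf I_k^\vartheta]$ it holds that $|\mathcal{N}^\vartheta(x)-f(x)|\le V$; (iii) for all $j\in\{1,\dots,h\}$ with $I_j^\vartheta\neq\emptyset$ and all $x\in[\sup I_j^\vartheta,b]$ it holds that $|\mathcal{N}^\vartheta(x)-f(x)|\le\max\{V,|f(b)-\mathcal{N}^\vartheta(b)|\}$; and (iv) for all $j\in\{1,\dots,h\}$ with $I_j^\vartheta\neq\emptyset$ and all $x\in[a,\inf I_j^\vartheta]$ it holds that $|\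mathcal{N}^\vartheta(x)-f(x)|\le\max\{V,|f(a)-\mathcal{N}^\vartheta(a)|\}$.
   Context: Let $\mathfrak{c}(x)=\min\{\max\{x,0\},1\}$. For $F\in C(\mathbb{R},\mathbb{R})$ let $\operatorname{Lip}(F)=\sup_{x,y\in[a,b],x\ne y}\frac{|F(x)-F(y)|}{|x-y|}$. For $\theta=(\theta_1,\dots,\theta_{h+1})\in\mathbb{R}^{h+1}$ and $i\in\{1,\dots,h\}$ let $\psi_i(\theta)=-[w_i]^{-1}\theta_i$, $I_i^\theta=(\psi_i(\theta),\psi_i(\theta)+[w_i]^{-1})\cap(a,b)$, $\mathcal{N}^\theta(x)=\theta_{h+1}+\sum_{i=1}^hv_i\mathfrak{c}(w_ix+\theta_i)$, and $\mathcal{L}(\theta)=\int_a^b(\mathcal{N}^\theta(x)-f(x))^2p(x)\,\mathrm{d}x$ ($\mathcal{L}$ is continuously differentiable). *)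

theory Defs
  imports "HOL-Analysis.Analysis"
begin

definition clip :: "real \<Rightarrow> real" where
  "clip x = min (max x 0) 1"

definition Lip :: "(real \<Rightarrow> real) \<Rightarrow> real \<Rightarrow> real \<Rightarrow> ereal" where
  "Lip F a b = Sup {ereal (\<bar>F x - F y\<bar> / \<bar>x - y\<bar>) | x y.
      x \<in> {a..b} \<and> y \<in> {a..b} \<and> x \<noteq> y}"

text \<open>Parameter vectors theta in R^(h+1) are functions nat => real, components 1..h+1.\<close>
definition psi :: "(nat \<Rightarrow> real) \<Rightarrow> (nat \<Rightarrow> real) \<Rightarrow> nat \<Rightarrow> real" where
  "psi w \<theta> i = - (\<theta> i) / w i"

definition Iint :: "real \<Rightarrow> real \<Rightarrow> (nat \<Rightarrow> real) \<Rightarrow> (nat \<Rightarrow> real) \<Rightarrow> nat \<Rightarrow> real set" where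
  "Iint a b w \<theta> i = {psi w \<theta> i <..< psi w \<theta> i + 1 / w i} \<inter> {a<..<b}"

definition NN :: "nat \<Rightarrow> (nat \<Rightarrow> real) \<Rightarrow> (nat \<Rightarrow> real) \<Rightarrow> (nat \<Rightarrow> real) \<Rightarrow> real \<Rightarrow> real" where
  "NN h v w \<theta> x = \<theta> (h + 1) + (\<Sum>i = 1..h. v i * clip (w i * x + \<theta> i))"

definition LL :: "real \<Rightarrow> real \<Rightarrow> nat \<Rightarrow> (nat \<Rightarrow> real) \<Rightarrow> (nat \<Rightarrow> real)
    \<Rightarrow> (real \<Rightarrow> real) \<Rightarrow> (real \<Rightarrow> real) \<Rightarrow> (nat \<Rightarrow> real) \<Rightarrow> real" where
  "LL a b h v w f p \<theta> = integral {a..b} (\<lambda>x. (NN h v w \<theta> x - f x)\<^sup>2 * p x)"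

definition Vsup :: "real \<Rightarrow> real \<Rightarrow> nat \<Rightarrow> (nat \<Rightarrow> real) \<Rightarrow> (nat \<Rightarrow> real) \<Rightarrow> (nat \<Rightarrow> real) \<Rightarrow> real" where
  "Vsup a b h v w \<theta> = Sup ((\<lambda>x. \<Sum>j\<in>{j \<in> {1..h}. x \<in> Iint a b w \<theta> j}. v j) ` {a<..<b})"

end

theory Submission
  imports Defs
begin

(*
  Let r = N - f be the residual of the network N = N^theta. On a nonempty activation interval I_j,
  r is strictly increasing: N grows there with slope at least v_j w_j, which exceeds Lip f.
  Criticality in theta_j forces r to vanish somewhere in I_j: if r had constant sign on I_j, moving
  theta_j by t against that sign would decrease L by at least c t for small t > 0, since outside
  I_j the move changes N only on two strips of width t / w_j.
  Starting from such a zero z, N(x) differs from N(z) for x in I_j by at most the total weight of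
  the neurons active at z: a neuron switching between z and x has an activation interval
  overlapping I_j, and r is strictly increasing on the union of the two intervals, so z is also its
  zero. As f is monotone, |r(x)| <= |N(x) - N(z)|, which gives (i). Between activation intervals N
  is constant, hence r is nonincreasing there; combined with (i), extended to the closure of the
  active set by continuity, this yields (ii)-(iv).
*)

lemma clip_eq_self: "0 \<le> x \<Longrightarrow> x \<le> 1 \<Longrightarrow> clip x = x"
  unfolding clip_def by auto

lemma continuous_on_clip [continuous_intros]:
  "continuous_on S g \<Longrightarrow> continuous_on S (\<lambda>x. clip (g x))"
  unfolding clip_def by (intro continuous_intros)

lemma clip_diff_bounds: "x \<le> y \<Longrightarrow> 0 \<le> clip y - clip x \<and> clip y - clip x \<le> 1"
  unfolding clip_def by auto

lemma clip_change_imp_active: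
  assumes "x < y" "clip x \<noteq> clip y"
  obtains u where "x < u" "u < y" "0 < u" "u < 1"
proof
  let ?u = "(max x 0 + min y 1) / 2"
  have "0 < y" "x < 1" using assms unfolding clip_def by auto
  then show "x < ?u" "?u < y" "0 < ?u" "?u < 1" using assms(1) by auto
qed

lemma clip_shift_abs_le: "\<sigma> \<in> {-1, 1} \<Longrightarrow> 0 \<le> t \<Longrightarrow> \<bar>clip (u + \<sigma> * t) - clip u\<bar> \<le> t"
  unfolding clip_def by auto

lemma clip_shift_sign: "\<sigma> \<in> {-1, 1} \<Longrightarrow> 0 \<le> t \<Longrightarrow> 0 \<le> \<sigma> * (clip (u + \<sigma> * t) - clip u)"
  unfolding clip_def by auto

lemma clip_shift_inner:
  "\<sigma> \<in> {-1, 1} \<Longrightarrow> 0 \<le> t \<Longrightarrow> t \<le> u \<Longrightarrow> u \<le> 1 - t \<Longrightarrow> clip (u + \<sigma> * t) - clip u = \<sigma> * t"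
  unfolding clip_def by auto

lemma clip_shift_outer:
  "\<sigma> \<in> {-1, 1} \<Longrightarrow> 0 \<le> t \<Longrightarrow> \<not> (0 < u \<and> u < 1) \<Longrightarrow> clip (u + \<sigma> * t) \<noteq> clip u
    \<Longrightarrow> (- t \<le> u \<and> u \<le> 0) \<or> (1 \<le> u \<and> u \<le> 1 + t)"
  unfolding clip_def by auto

lemma has_integral_indicator_Icc:
  fixes a b c d k :: real
  shows "((\<lambda>x. if x \<in> {c..d} then k else 0) has_integral (max 0 (min d b - max c a) * k)) {a..b}"
proof -
  have "{c..d} \<inter> {a..b} = {max c a..min d b}" by auto
  then show ?thesis
    unfolding has_integral_restrict_Int
    using has_integral_const_real[of k "max c a" "min d b"] by (simp add: max_def)
qed

lemma integral_square_perturbation: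
  fixes G D p :: "real \<Rightarrow> real"
  assumes "continuous_on {a..b} G" "continuous_on {a..b} D" "continuous_on {a..b} p"
  shows "integral {a..b} (\<lambda>x. (G x + v * D x)\<^sup>2 * p x) - integral {a..b} (\<lambda>x. (G x)\<^sup>2 * p x)
    = 2 * v * integral {a..b} (\<lambda>x. G x * D x * p x) + v\<^sup>2 * integral {a..b} (\<lambda>x. (D x)\<^sup>2 * p x)"
proof -
  have int: "(\<lambda>x. (G x + v * D x)\<^sup>2 * p x) integrable_on {a..b}"
    "(\<lambda>x. (G x)\<^sup>2 * p x) integrable_on {a..b}"
    "(\<lambda>x. G x * D x * p x) integrable_on {a..b}" "(\<lambda>x. (D x)\<^sup>2 * p x) integrable_on {a..b}"
    using assms by (auto intro!: integrable_continuous_interval continuous_intros)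
  have "(\<lambda>x. (G x + v * D x)\<^sup>2 * p x)
      = (\<lambda>x. (G x)\<^sup>2 * p x + (2 * v * (G x * D x * p x) + v\<^sup>2 * ((D x)\<^sup>2 * p x)))"
    by (auto simp: power2_eq_square algebra_simps)
  moreover have "((\<lambda>x. (G x)\<^sup>2 * p x + (2 * v * (G x * D x * p x) + v\<^sup>2 * ((D x)\<^sup>2 * p x))) has_integral
      integral {a..b} (\<lambda>x. (G x)\<^sup>2 * p x) + (2 * v * integral {a..b} (\<lambda>x. G x * D x * p x)
      + v\<^sup>2 * integral {a..b} (\<lambda>x. (D x)\<^sup>2 * p x))) {a..b}"
    using int by (intro has_integral_add has_integral_mult_right integrable_integral)
  ultimately show ?thesis by (simp add: integral_unique)
qed

lemma DERIV_zero_imp_no_linear_decrease: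
  fixes F :: "real \<Rightarrow> real"
  assumes "(F has_real_derivative 0) (at x)" "\<sigma> \<in> {-1, 1}" "0 < c" "0 < \<delta>"
    and decrease: "\<And>t. 0 < t \<Longrightarrow> t \<le> \<delta> \<Longrightarrow> F (x + \<sigma> * t) - F x \<le> - c * t"
  shows False
proof -
  have "(F has_real_derivative 0) (at (x + \<sigma> * 0))" using assms(1) by simp
  moreover have "((\<lambda>t. x + \<sigma> * t) has_real_derivative \<sigma>) (at 0)"
    by (auto intro!: derivative_eq_intros)
  ultimately have "((\<lambda>t. F (x + \<sigma> * t)) has_real_derivative 0) (at 0)"
    using DERIV_chain2 by fastforce
  then have tilted: "((\<lambda>t. F (x + \<sigma> * t) + c / 2 * t) has_real_derivative c / 2) (at 0)"
    by (auto intro!: derivative_eq_intros)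
  obtain d where "0 < d" and increase: "\<And>t. 0 < t \<Longrightarrow> t < d \<Longrightarrow> F x < F (x + \<sigma> * t) + c / 2 * t"
    using DERIV_pos_inc_right[OF tilted] \<open>0 < c\<close> by force
  define t where "t = min \<delta> (d / 2)"
  have "0 < t" "t \<le> \<delta>" "t < d" unfolding t_def using \<open>0 < d\<close> \<open>0 < \<delta>\<close> by auto
  then have "F x < F (x + \<sigma> * t) + c / 2 * t" "F (x + \<sigma> * t) - F x \<le> - c * t" "0 < c * t"
    using increase decrease \<open>0 < c\<close> by auto
  then show False by linarith
qed

lemma connected_nonvanishing_imp_same_sgn:
  fixes G :: "'a::topological_space \<Rightarrow> real"
  assumes "connected S" "continuous_on S G" "\<And>x. x \<in> S \<Longrightarrow> G x \<noteq> 0" "x \<in> S" "y \<in> S"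
  shows "sgn (G x) = sgn (G y)"
proof (rule ccontr)
  assume "sgn (G x) \<noteq> sgn (G y)"
  then have "min (G x) (G y) \<le> 0" "0 \<le> max (G x) (G y)"
    using assms(3-5) by (auto simp: sgn_if split: if_splits)
  moreover have "min (G x) (G y) \<in> G ` S" "max (G x) (G y) \<in> G ` S"
    using assms(4,5) by (auto simp: min_def max_def)
  ultimately have "0 \<in> G ` S"
    using connectedD_interval[OF connected_continuous_image[OF assms(2,1)]] by blast
  then show False using assms(3) by auto
qed

lemma strict_mono_on_across_intervals:
  fixes g :: "real \<Rightarrow> real"
  assumes "is_interval S" "is_interval T" "y \<in> S \<inter> T" "strict_mono_on S g" "strict_mono_on T g"
    and "r \<in> S" "s \<in> T" "r < s"
  shows "g r < g s"
proof -
  consider "y \<le> r" | "s \<le> y" | "r < y" "y < s" by linarith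
  then show ?thesis
  proof cases
    case 1
    then have "r \<in> T" using mem_is_interval_1_I[OF assms(2)] assms(3,7,8) by (meson IntD2 less_imp_le)
    then show ?thesis using strict_mono_onD[OF assms(5)] assms(7,8) by blast
  next
    case 2
    then have "s \<in> S" using mem_is_interval_1_I[OF assms(1)] assms(3,6,8) by (meson IntD1 less_imp_le)
    then show ?thesis using strict_mono_onD[OF assms(4)] assms(6,8) by blast
  next
    case 3
    then have "g r < g y" "g y < g s"
      using strict_mono_onD[OF assms(4)] strict_mono_onD[OF assms(5)] assms(3,6,7) by auto
    then show ?thesis by simp
  qed
qed

lemma strict_mono_on_Un_intervals:
  fixes g :: "real \<Rightarrow> real"
  assumes "is_interval S" "is_interval T" "S \<inter> T \<noteq> {}" "strict_mono_on S g" "strict_mono_on T g"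
  shows "strict_mono_on (S \<union> T) g"
proof (rule strict_mono_onI)
  obtain y where "y \<in> S \<inter> T" using assms(3) by blast
  fix r s assume "r \<in> S \<union> T" "s \<in> S \<union> T" "r < s"
  then show "g r < g s"
    using strict_mono_on_across_intervals[OF assms(1,2) \<open>y \<in> S \<inter> T\<close> assms(4,5)]
      strict_mono_on_across_intervals[OF assms(2,1) _ assms(5,4), of y] \<open>y \<in> S \<inter> T\<close>
      strict_mono_onD[OF assms(4)] strict_mono_onD[OF assms(5)]
    by blast
qed

lemma Lip_less_imp_diff_less:
  assumes "Lip F a b < ereal L" "a \<le> x" "x < y" "y \<le> b"
  shows "F y - F x < L * (y - x)"
proof -
  have "ereal (\<bar>F y - F x\<bar> / \<bar>y - x\<bar>) \<le> Lip F a b"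
    unfolding Lip_def using assms(2-4)
    by (intro Sup_upper CollectI exI[of _ y] exI[of _ x]) auto
  then have "ereal (\<bar>F y - F x\<bar> / \<bar>y - x\<bar>) < ereal L" using assms(1) by (rule le_less_trans)
  then have "\<bar>F y - F x\<bar> / (y - x) < L" using assms(3) by simp
  then show ?thesis using assms(3) by (simp add: pos_divide_less_eq)
qed

lemma clip_shift_product_le:
  assumes "\<sigma> \<in> {-1, 1}" "0 < t" "\<bar>g\<bar> \<le> M" "0 \<le> q" "q \<le> P"
    and band_sign: "0 < u \<Longrightarrow> u < 1 \<Longrightarrow> \<sigma> * g * q \<le> 0"
  shows "g * (clip (u + \<sigma> * t) - clip u) * q
    \<le> (if - t \<le> u \<and> u \<le> 0 \<or> 1 \<le> u \<and> u \<le> 1 + t then M * t * P else 0)"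
proof -
  define \<Delta> where "\<Delta> = clip (u + \<sigma> * t) - clip u"
  have "\<bar>\<Delta>\<bar> \<le> t" unfolding \<Delta>_def using clip_shift_abs_le assms(1,2) by simp
  then have "\<bar>g * \<Delta> * q\<bar> \<le> M * t * P" unfolding abs_mult using assms(3-5) by (intro mult_mono) auto
  then have crude: "g * \<Delta> * q \<le> M * t * P" by linarith
  have "0 \<le> M * t * P" using assms(2-5) by simp
  consider "0 < u" "u < 1" | "\<Delta> = 0" | "\<not> (0 < u \<and> u < 1)" "\<Delta> \<noteq> 0" by blast
  then show ?thesis
  proof cases
    case 1
    have "\<sigma> * \<sigma> = 1" using assms(1) by auto
    then have "g * \<Delta> * q = (\<sigma> * g * q) * (\<sigma> * \<Delta>)" by (simp add: algebra_simps)
    also have "\<dots> \<le> 0"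
      using band_sign[OF 1] clip_shift_sign[OF assms(1), of t u] assms(2)
      unfolding \<Delta>_def by (simp add: mult_nonpos_nonneg)
    finally show ?thesis using \<open>0 \<le> M * t * P\<close> unfolding \<Delta>_def by auto
  next
    case 2
    then show ?thesis using \<open>0 \<le> M * t * P\<close> unfolding \<Delta>_def by auto
  next
    case 3
    then have "- t \<le> u \<and> u \<le> 0 \<or> 1 \<le> u \<and> u \<le> 1 + t"
      using clip_shift_outer[OF assms(1)] assms(2) unfolding \<Delta>_def by auto
    then show ?thesis using crude unfolding \<Delta>_def by simp
  qed
qed

lemma first_order_shift_integral_le:
  fixes G p :: "real \<Rightarrow> real"
  assumes "0 < w" "0 < t" "\<sigma> \<in> {-1, 1}" "a \<le> \<alpha>" "\<alpha> \<le> \<beta>" "\<beta> \<le> b"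
    and "continuous_on {a..b} G" "continuous_on {a..b} p"
    and bounds: "\<And>x. x \<in> {a..b} \<Longrightarrow> \<bar>G x\<bar> \<le> M \<and> 0 \<le> p x \<and> p x \<le> P"
    and band_sign: "\<And>x. x \<in> {a..b} \<Longrightarrow> 0 < w * x + s \<Longrightarrow> w * x + s < 1 \<Longrightarrow> \<sigma> * G x * p x \<le> 0"
    and core: "\<And>x. x \<in> {\<alpha>..\<beta>} \<Longrightarrow> t \<le> w * x + s \<and> w * x + s \<le> 1 - t \<and> \<mu> \<le> - \<sigma> * G x * p x"
  shows "integral {a..b} (\<lambda>x. G x * (clip (w * x + s + \<sigma> * t) - clip (w * x + s)) * p x)
    \<le> - t * \<mu> * (\<beta> - \<alpha>) + 2 * M * t * P * (t / w)"
proof -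
  define \<Delta> where "\<Delta> x = clip (w * x + s + \<sigma> * t) - clip (w * x + s)" for x
  define l\<^sub>1 l\<^sub>2 r\<^sub>1 r\<^sub>2
    where "l\<^sub>1 = (- s - t) / w" "l\<^sub>2 = - s / w" "r\<^sub>1 = (1 - s) / w" "r\<^sub>2 = (1 - s + t) / w"
  define m where "m = M * t * P"
  (* On [l\<^sub>1, l\<^sub>2] and [r\<^sub>1, r\<^sub>2], strips of width t / w, the shift can switch a neuron that is
     off, resp. saturated, at x; elsewhere outside the band 0 < w x + s < 1 it changes nothing. *)
  define B where "B x = (if x \<in> {\<alpha>..\<beta>} then - (t * \<mu>) else 0)
    + (if x \<in> {l\<^sub>1..l\<^sub>2} then m else 0) + (if x \<in> {r\<^sub>1..r\<^sub>2} then m else 0)" for x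
  have "0 \<le> M" "0 \<le> P" using bounds[of a] assms(4-6) by auto
  then have "0 \<le> m" unfolding m_def using \<open>0 < t\<close> by simp
  have B_integral: "(B has_integral max 0 (min \<beta> b - max \<alpha> a) * (- (t * \<mu>))
      + max 0 (min l\<^sub>2 b - max l\<^sub>1 a) * m + max 0 (min r\<^sub>2 b - max r\<^sub>1 a) * m) {a..b}"
    unfolding B_def[abs_def] by (intro has_integral_add has_integral_indicator_Icc)
  have "l\<^sub>2 - l\<^sub>1 = t / w" "r\<^sub>2 - r\<^sub>1 = t / w" "0 < t / w"
    using \<open>0 < w\<close> \<open>0 < t\<close> unfolding l\<^sub>1_l\<^sub>2_r\<^sub>1_r\<^sub>2_def by (auto simp: field_simps)
  then have "max 0 (min l\<^sub>2 b - max l\<^sub>1 a) \<le> t / w" "max 0 (min r\<^sub>2 b - max r\<^sub>1 a) \<le> t / w"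
    by (auto simp: max_def min_def)
  note strips = this[THEN mult_right_mono, OF \<open>0 \<le> m\<close>]
  have "integral {a..b} B = (\<beta> - \<alpha>) * (- (t * \<mu>))
      + max 0 (min l\<^sub>2 b - max l\<^sub>1 a) * m + max 0 (min r\<^sub>2 b - max r\<^sub>1 a) * m"
    using integral_unique[OF B_integral] assms(4-6) by simp
  also have "\<dots> \<le> (\<beta> - \<alpha>) * (- (t * \<mu>)) + t / w * m + t / w * m"
    using strips by linarith
  also have "\<dots> = - t * \<mu> * (\<beta> - \<alpha>) + 2 * M * t * P * (t / w)"
    unfolding m_def by (simp add: algebra_simps)
  finally have B_bound: "integral {a..b} B \<le> - t * \<mu> * (\<beta> - \<alpha>) + 2 * M * t * P * (t / w)" .
  have "G x * \<Delta> x * p x \<le> B x" if x: "x \<in> {a..b}" for x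
  proof (cases "x \<in> {\<alpha>..\<beta>}")
    case True
    then have "\<Delta> x = \<sigma> * t" unfolding \<Delta>_def using core[OF True] assms(2,3) clip_shift_inner by auto
    then have "G x * \<Delta> x * p x \<le> - (t * \<mu>)"
      using core[OF True] mult_left_mono[of \<mu> "- \<sigma> * G x * p x" t] \<open>0 < t\<close> by (auto simp: algebra_simps)
    then show ?thesis unfolding B_def using True \<open>0 \<le> m\<close> by auto
  next
    case False
    have "- t \<le> w * x + s \<and> w * x + s \<le> 0 \<Longrightarrow> x \<in> {l\<^sub>1..l\<^sub>2}"
      "1 \<le> w * x + s \<and> w * x + s \<le> 1 + t \<Longrightarrow> x \<in> {r\<^sub>1..r\<^sub>2}"
      unfolding l\<^sub>1_l\<^sub>2_r\<^sub>1_r\<^sub>2_def using \<open>0 < w\<close> by (auto simp: field_simps)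
    moreover have "G x * \<Delta> x * p x
        \<le> (if - t \<le> w * x + s \<and> w * x + s \<le> 0 \<or> 1 \<le> w * x + s \<and> w * x + s \<le> 1 + t then m else 0)"
      unfolding \<Delta>_def m_def using bounds[OF x] band_sign[OF x]
      by (intro clip_shift_product_le[OF assms(3,2)]) auto
    ultimately show ?thesis unfolding B_def using False \<open>0 \<le> m\<close> by (auto split: if_splits)
  qed
  moreover have "(\<lambda>x. G x * \<Delta> x * p x) integrable_on {a..b}"
    unfolding \<Delta>_def using assms(7,8) by (intro integrable_continuous_interval continuous_intros)
  ultimately have "integral {a..b} (\<lambda>x. G x * \<Delta> x * p x) \<le> integral {a..b} B"
    using B_integral by (intro integral_le) (auto intro: has_integral_integrable)
  then show ?thesis using B_bound unfolding \<Delta>_def by linarith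
qed

lemma clip_shift_loss_le:
  fixes G p :: "real \<Rightarrow> real"
  assumes "0 < v" "0 < w" "0 < t" "\<sigma> \<in> {-1, 1}" "a \<le> \<alpha>" "\<alpha> \<le> \<beta>" "\<beta> \<le> b"
    and G: "continuous_on {a..b} G" and p: "continuous_on {a..b} p"
    and bounds: "\<And>x. x \<in> {a..b} \<Longrightarrow> \<bar>G x\<bar> \<le> M \<and> 0 \<le> p x \<and> p x \<le> P"
    and band_sign: "\<And>x. x \<in> {a..b} \<Longrightarrow> 0 < w * x + s \<Longrightarrow> w * x + s < 1 \<Longrightarrow> \<sigma> * G x * p x \<le> 0"
    and core: "\<And>x. x \<in> {\<alpha>..\<beta>} \<Longrightarrow> t \<le> w * x + s \<and> w * x + s \<le> 1 - t \<and> \<mu> \<le> - \<sigma> * G x * p x"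
  shows "integral {a..b} (\<lambda>x. (G x + v * (clip (w * x + s + \<sigma> * t) - clip (w * x + s)))\<^sup>2 * p x)
      - integral {a..b} (\<lambda>x. (G x)\<^sup>2 * p x)
    \<le> - 2 * v * \<mu> * (\<beta> - \<alpha>) * t + (4 * v * M * P / w + v\<^sup>2 * P * (b - a)) * t\<^sup>2"
proof -
  define \<Delta> where "\<Delta> x = clip (w * x + s + \<sigma> * t) - clip (w * x + s)" for x
  have "continuous_on {a..b} \<Delta>" unfolding \<Delta>_def by (intro continuous_intros)
  have "\<bar>\<Delta> x\<bar> \<le> t" for x unfolding \<Delta>_def using clip_shift_abs_le assms(3,4) by simp
  then have "(\<Delta> x)\<^sup>2 \<le> t\<^sup>2" for x using power_mono[of "\<bar>\<Delta> x\<bar>" t 2] by simp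
  then have "(\<Delta> x)\<^sup>2 * p x \<le> t\<^sup>2 * P" if "x \<in> {a..b}" for x
    using bounds[OF that] by (intro mult_mono) auto
  then have "integral {a..b} (\<lambda>x. (\<Delta> x)\<^sup>2 * p x) \<le> integral {a..b} (\<lambda>_. t\<^sup>2 * P)"
    using \<open>continuous_on {a..b} \<Delta>\<close> p
    by (intro integral_le integrable_continuous_interval continuous_intros) auto
  then have second: "integral {a..b} (\<lambda>x. (\<Delta> x)\<^sup>2 * p x) \<le> (b - a) * (t\<^sup>2 * P)"
    using assms(5-7) by (simp add: ac_simps)
  have first: "integral {a..b} (\<lambda>x. G x * \<Delta> x * p x) \<le> - t * \<mu> * (\<beta> - \<alpha>) + 2 * M * t * P * (t / w)"
    unfolding \<Delta>_def
    by (rule first_order_shift_integral_le[OF assms(2,3,4,5,6,7) G p bounds band_sign core])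
  have "2 * v * integral {a..b} (\<lambda>x. G x * \<Delta> x * p x) + v\<^sup>2 * integral {a..b} (\<lambda>x. (\<Delta> x)\<^sup>2 * p x)
      \<le> 2 * v * (- t * \<mu> * (\<beta> - \<alpha>) + 2 * M * t * P * (t / w)) + v\<^sup>2 * ((b - a) * (t\<^sup>2 * P))"
    by (rule add_mono[OF mult_left_mono mult_left_mono]) (use first second \<open>0 < v\<close> in auto)
  also have "\<dots> = - 2 * v * \<mu> * (\<beta> - \<alpha>) * t + (4 * v * M * P / w + v\<^sup>2 * P * (b - a)) * t\<^sup>2"
    using \<open>0 < w\<close> by (simp add: field_simps power2_eq_square)
  finally show ?thesis
    using integral_square_perturbation[OF G \<open>continuous_on {a..b} \<Delta>\<close> p, of v] unfolding \<Delta>_def by simp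
qed

lemma clip_shift_core_interval:
  fixes G p :: "real \<Rightarrow> real"
  assumes "0 < w" and G: "continuous_on {a..b} G" and p: "continuous_on {a..b} p"
    and p_pos: "\<And>x. x \<in> {a<..<b} \<Longrightarrow> 0 < p x"
    and active: "x\<^sub>0 \<in> {a<..<b}" "0 < w * x\<^sub>0 + s" "w * x\<^sub>0 + s < 1"
    and sign: "\<And>x. x \<in> {a<..<b} \<Longrightarrow> 0 < w * x + s \<Longrightarrow> w * x + s < 1 \<Longrightarrow> \<sigma> * G x < 0"
  obtains \<alpha> \<beta> \<mu> \<tau> where "a \<le> \<alpha>" "\<alpha> < \<beta>" "\<beta> \<le> b" "0 < \<mu>" "0 < \<tau>"
    "\<And>x. x \<in> {\<alpha>..\<beta>} \<Longrightarrow> \<tau> \<le> w * x + s \<and> w * x + s \<le> 1 - \<tau> \<and> \<mu> \<le> - \<sigma> * G x * p x"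
proof -
  define lo hi where "lo = max a (- s / w)" "hi = min b ((1 - s) / w)"
  have band: "x \<in> {a<..<b} \<and> 0 < w * x + s \<and> w * x + s < 1 \<longleftrightarrow> lo < x \<and> x < hi" for x
  proof -
    have "- s / w < x \<longleftrightarrow> 0 < w * x + s" "x < (1 - s) / w \<longleftrightarrow> w * x + s < 1"
      using \<open>0 < w\<close> by (auto simp: field_simps)
    then show ?thesis unfolding lo_hi_def by auto
  qed
  then have "lo < hi" using band[of x\<^sub>0] active by auto
  define \<alpha> \<beta> where "\<alpha> = (2 * lo + hi) / 3" "\<beta> = (lo + 2 * hi) / 3"
  have "lo < \<alpha>" "\<alpha> < \<beta>" "\<beta> < hi" unfolding \<alpha>_\<beta>_def using \<open>lo < hi\<close> by auto
  then have core_band: "x \<in> {a<..<b} \<and> 0 < w * x + s \<and> w * x + s < 1" if "x \<in> {\<alpha>..\<beta>}" for x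
    using band that by auto
  have "a \<le> \<alpha>" "\<beta> \<le> b" using core_band[of \<alpha>] core_band[of \<beta>] \<open>\<alpha> < \<beta>\<close> by auto
  then have cont: "continuous_on {\<alpha>..\<beta>} (\<lambda>x. - \<sigma> * G x * p x)"
    using continuous_on_subset[OF G] continuous_on_subset[OF p] by (intro continuous_intros) auto
  have "{\<alpha>..\<beta>} \<noteq> {}" using \<open>\<alpha> < \<beta>\<close> by simp
  then obtain x\<^sub>m where "x\<^sub>m \<in> {\<alpha>..\<beta>}"
    and x\<^sub>m: "\<And>x. x \<in> {\<alpha>..\<beta>} \<Longrightarrow> - \<sigma> * G x\<^sub>m * p x\<^sub>m \<le> - \<sigma> * G x * p x"
    using continuous_attains_inf[OF compact_Icc _ cont] by auto
  have "0 < - \<sigma> * G x\<^sub>m" "0 < p x\<^sub>m" using sign p_pos core_band[OF \<open>x\<^sub>m \<in> {\<alpha>..\<beta>}\<close>] by auto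
  then have \<mu>: "0 < - \<sigma> * G x\<^sub>m * p x\<^sub>m" by (metis mult_pos_pos)
  define \<tau> where "\<tau> = min (w * \<alpha> + s) (1 - (w * \<beta> + s))"
  have \<tau>: "0 < \<tau>" unfolding \<tau>_def using core_band[of \<alpha>] core_band[of \<beta>] \<open>\<alpha> < \<beta>\<close> by auto
  show ?thesis
  proof (rule that[OF \<open>a \<le> \<alpha>\<close> \<open>\<alpha> < \<beta>\<close> \<open>\<beta> \<le> b\<close> \<mu> \<tau>])
    fix x assume "x \<in> {\<alpha>..\<beta>}"
    moreover from this have "w * \<alpha> \<le> w * x" "w * x \<le> w * \<beta>" using \<open>0 < w\<close> by simp_all
    ultimately show "\<tau> \<le> w * x + s \<and> w * x + s \<le> 1 - \<tau> \<and> - \<sigma> * G x\<^sub>m * p x\<^sub>m \<le> - \<sigma> * G x * p x"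
      using x\<^sub>m unfolding \<tau>_def by auto
  qed
qed

lemma clip_shift_descent:
  fixes G p :: "real \<Rightarrow> real"
  assumes "0 < v" "0 < w" "\<sigma> \<in> {-1, 1}"
    and G: "continuous_on {a..b} G" and p: "continuous_on {a..b} p"
    and p_pos_iff: "\<And>x. x \<in> {a..b} \<Longrightarrow> 0 < p x \<longleftrightarrow> x \<in> {a<..<b}" and p_nonneg: "\<And>x. 0 \<le> p x"
    and active: "x\<^sub>0 \<in> {a<..<b}" "0 < w * x\<^sub>0 + s" "w * x\<^sub>0 + s < 1"
    and sign: "\<And>x. x \<in> {a<..<b} \<Longrightarrow> 0 < w * x + s \<Longrightarrow> w * x + s < 1 \<Longrightarrow> \<sigma> * G x < 0"
  obtains c \<delta> where "0 < c" "0 < \<delta>"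
    "\<And>t. 0 < t \<Longrightarrow> t \<le> \<delta> \<Longrightarrow>
      integral {a..b} (\<lambda>x. (G x + v * (clip (w * x + s + \<sigma> * t) - clip (w * x + s)))\<^sup>2 * p x)
      - integral {a..b} (\<lambda>x. (G x)\<^sup>2 * p x) \<le> - c * t"
proof -
  have "0 < p x" if "x \<in> {a<..<b}" for x using p_pos_iff[of x] that by auto
  then obtain \<alpha> \<beta> \<mu> \<tau> where "a \<le> \<alpha>" "\<alpha> < \<beta>" "\<beta> \<le> b" "0 < \<mu>" "0 < \<tau>" and core:
    "\<And>x. x \<in> {\<alpha>..\<beta>} \<Longrightarrow> \<tau> \<le> w * x + s \<and> w * x + s \<le> 1 - \<tau> \<and> \<mu> \<le> - \<sigma> * G x * p x"
    using clip_shift_core_interval[OF assms(2) G p _ active sign] by blast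
  obtain M where M: "\<And>x. x \<in> {a..b} \<Longrightarrow> \<bar>G x\<bar> \<le> M"
    using continuous_on_compact_bound[OF compact_Icc G] by (metis real_norm_def)
  obtain P where P: "\<And>x. x \<in> {a..b} \<Longrightarrow> p x \<le> P"
    using continuous_on_compact_bound[OF compact_Icc p] by (metis abs_le_D1 real_norm_def)
  have bounds: "\<bar>G x\<bar> \<le> M \<and> 0 \<le> p x \<and> p x \<le> P" if "x \<in> {a..b}" for x
    using M[OF that] P[OF that] p_nonneg[of x] by simp
  have band_sign: "\<sigma> * G x * p x \<le> 0" if "x \<in> {a..b}" "0 < w * x + s" "w * x + s < 1" for x
  proof (cases "x \<in> {a<..<b}")
    case True
    then show ?thesis using sign[OF True that(2,3)] p_nonneg[of x] by (simp add: mult_nonpos_nonneg)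
  next
    case False
    then have "p x = 0" using p_pos_iff[OF that(1)] p_nonneg[of x] by auto
    then show ?thesis by simp
  qed
  define K where "K = 4 * v * M * P / w + v\<^sup>2 * P * (b - a)"
  define c where "c = v * \<mu> * (\<beta> - \<alpha>)"
  have "0 < c" unfolding c_def using \<open>0 < v\<close> \<open>0 < \<mu>\<close> \<open>\<alpha> < \<beta>\<close> by simp
  have "0 \<le> M" "0 \<le> P" "a < b" using bounds[of \<alpha>] \<open>a \<le> \<alpha>\<close> \<open>\<alpha> < \<beta>\<close> \<open>\<beta> \<le> b\<close> by force+
  then have "0 \<le> K" unfolding K_def using \<open>0 < v\<close> \<open>0 < w\<close> by simp
  show thesis
  proof
    show "0 < c" "0 < min \<tau> (c / (K + 1))" using \<open>0 < c\<close> \<open>0 < \<tau>\<close> \<open>0 \<le> K\<close> by auto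
    fix t assume "0 < t" "t \<le> min \<tau> (c / (K + 1))"
    then have "K * t \<le> c" using \<open>0 \<le> K\<close> by (simp add: field_simps)
    then have "K * t\<^sup>2 \<le> c * t"
      using \<open>0 < t\<close> mult_right_mono[of "K * t" c t] by (simp add: power2_eq_square algebra_simps)
    have core_t: "t \<le> w * x + s \<and> w * x + s \<le> 1 - t \<and> \<mu> \<le> - \<sigma> * G x * p x" if "x \<in> {\<alpha>..\<beta>}" for x
      using core[OF that] \<open>t \<le> min \<tau> (c / (K + 1))\<close> by auto
    from clip_shift_loss_le[OF assms(1,2) \<open>0 < t\<close> assms(3) \<open>a \<le> \<alpha>\<close> _ \<open>\<beta> \<le> b\<close> G p bounds band_sign core_t]
    show "integral {a..b} (\<lambda>x. (G x + v * (clip (w * x + s + \<sigma> * t) - clip (w * x + s)))\<^sup>2 * p x)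
      - integral {a..b} (\<lambda>x. (G x)\<^sup>2 * p x) \<le> - c * t"
      using \<open>\<alpha> < \<beta>\<close> \<open>K * t\<^sup>2 \<le> c * t\<close> unfolding K_def c_def by (simp add: algebra_simps)
  qed
qed

lemma mem_Iint_iff:
  "0 < w i \<Longrightarrow> x \<in> Iint a b w \<theta> i \<longleftrightarrow> x \<in> {a<..<b} \<and> 0 < w i * x + \<theta> i \<and> w i * x + \<theta> i < 1"
  unfolding Iint_def psi_def by (auto simp: field_simps)

lemma is_interval_Iint: "is_interval (Iint a b w \<theta> i)"
  unfolding Iint_def by (intro is_interval_Int is_interval_oo)

lemma Iint_le_Sup: "y \<in> Iint a b w \<theta> j \<Longrightarrow> y \<le> Sup (Iint a b w \<theta> j)"
  by (rule cSup_upper) (auto intro!: bdd_aboveI[of _ b] simp: Iint_def)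

lemma Inf_le_Iint: "y \<in> Iint a b w \<theta> j \<Longrightarrow> Inf (Iint a b w \<theta> j) \<le> y"
  by (rule cInf_lower) (auto intro!: bdd_belowI[of _ a] simp: Iint_def)

lemma continuous_on_NN: "continuous_on S (NN h v w \<theta>)"
  unfolding NN_def by (intro continuous_intros)

lemma NN_diff:
  "NN h v w \<theta> y - NN h v w \<theta> x = (\<Sum>i = 1..h. v i * (clip (w i * y + \<theta> i) - clip (w i * x + \<theta> i)))"
  unfolding NN_def right_diff_distrib sum_subtractf by simp

lemma NN_fun_upd:
  assumes "i \<in> {1..h}"
  shows "NN h v w (\<theta>(i := r)) x = NN h v w \<theta> x + v i * (clip (w i * x + r) - clip (w i * x + \<theta> i))"
proof -
  have "NN h v w (\<theta>(i := r)) x - NN h v w \<theta> x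
      = (\<Sum>j = 1..h. v j * (clip (w j * x + (\<theta>(i := r)) j) - clip (w j * x + \<theta> j)))"
    using assms unfolding NN_def right_diff_distrib sum_subtractf by simp
  also have "\<dots> = v i * (clip (w i * x + r) - clip (w i * x + \<theta> i))"
    using assms by (subst sum.remove[of _ i]) auto
  finally show ?thesis by simp
qed

lemma clip_change_imp_Iint_between:
  assumes "0 < w i" "a \<le> y\<^sub>1" "y\<^sub>1 < y\<^sub>2" "y\<^sub>2 \<le> b" "clip (w i * y\<^sub>1 + \<theta> i) \<noteq> clip (w i * y\<^sub>2 + \<theta> i)"
  obtains y where "y\<^sub>1 < y" "y < y\<^sub>2" "y \<in> Iint a b w \<theta> i"
proof -
  have "w i * y\<^sub>1 + \<theta> i < w i * y\<^sub>2 + \<theta> i" using assms(1,3) by simp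
  then obtain u where u: "w i * y\<^sub>1 + \<theta> i < u" "u < w i * y\<^sub>2 + \<theta> i" "0 < u" "u < 1"
    using clip_change_imp_active assms(5) by blast
  define y where "y = (u - \<theta> i) / w i"
  have "w i * y + \<theta> i = u" unfolding y_def using assms(1) by simp
  then have "w i * y\<^sub>1 < w i * y" "w i * y < w i * y\<^sub>2" using u by linarith+
  then have "y\<^sub>1 < y" "y < y\<^sub>2" using assms(1) by simp_all
  moreover have "y \<in> Iint a b w \<theta> i"
    unfolding mem_Iint_iff[where w=w and i=i, OF assms(1)]
    using \<open>w i * y + \<theta> i = u\<close> u assms(2,4) calculation by simp
  ultimately show ?thesis using that by blast
qed

lemma LL_critical_imp_zero_in_Iint:
  assumes "i \<in> {1..h}" "0 < v i" "0 < w i"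
    and f: "continuous_on UNIV f" and p: "continuous_on UNIV p"
    and p_nonneg: "\<And>x. 0 \<le> p x" and p_pos: "{x. 0 < p x} = {a<..<b}"
    and critical: "((\<lambda>r. LL a b h v w f p (\<theta>(i := r))) has_real_derivative 0) (at (\<theta> i))"
    and x\<^sub>0: "x\<^sub>0 \<in> Iint a b w \<theta> i"
  obtains z where "z \<in> Iint a b w \<theta> i" "NN h v w \<theta> z = f z"
proof (rule ccontr)
  define G where "G x = NN h v w \<theta> x - f x" for x
  assume "\<not> thesis"
  with that have nonzero: "G x \<noteq> 0" if "x \<in> Iint a b w \<theta> i" for x
    using that unfolding G_def by auto
  have "continuous_on S G" for S
    unfolding G_def using continuous_on_subset[OF f] by (intro continuous_intros continuous_on_NN) auto
  note Iint_iff = mem_Iint_iff[where w=w and i=i, OF assms(3)]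
  define \<sigma> where "\<sigma> = - sgn (G x\<^sub>0)"
  have "\<sigma> \<in> {-1, 1}" using nonzero[OF x\<^sub>0] unfolding \<sigma>_def by (auto simp: sgn_if)
  have sign: "\<sigma> * G x < 0" if "x \<in> {a<..<b}" "0 < w i * x + \<theta> i" "w i * x + \<theta> i < 1" for x
  proof -
    have "sgn (G x) = - \<sigma>" "G x \<noteq> 0"
      using connected_nonvanishing_imp_same_sgn[OF is_interval_connected[OF is_interval_Iint]
          \<open>continuous_on _ G\<close> nonzero _ x\<^sub>0] nonzero that Iint_iff unfolding \<sigma>_def by auto
    then show ?thesis by (auto simp: sgn_if split: if_splits)
  qed
  have "x \<in> {a..b} \<Longrightarrow> 0 < p x \<longleftrightarrow> x \<in> {a<..<b}" for x using p_pos by auto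
  from clip_shift_descent[OF assms(2,3) \<open>\<sigma> \<in> {-1, 1}\<close> \<open>continuous_on _ G\<close> continuous_on_subset[OF p]
      this p_nonneg Iint_iff[THEN iffD1, OF x\<^sub>0, THEN conjunct1] _ _ sign]
  obtain c \<delta> where "0 < c" "0 < \<delta>" and decrease: "\<And>t. 0 < t \<Longrightarrow> t \<le> \<delta> \<Longrightarrow>
      integral {a..b} (\<lambda>x. (G x + v i * (clip (w i * x + \<theta> i + \<sigma> * t) - clip (w i * x + \<theta> i)))\<^sup>2 * p x)
      - integral {a..b} (\<lambda>x. (G x)\<^sup>2 * p x) \<le> - c * t"
    using Iint_iff x\<^sub>0 by blast
  have "LL a b h v w f p (\<theta>(i := r)) = integral {a..b}
      (\<lambda>x. (G x + v i * (clip (w i * x + r) - clip (w i * x + \<theta> i)))\<^sup>2 * p x)" for r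
    unfolding LL_def G_def NN_fun_upd[OF assms(1)] by (simp add: algebra_simps)
  moreover have "LL a b h v w f p \<theta> = integral {a..b} (\<lambda>x. (G x)\<^sup>2 * p x)"
    unfolding LL_def G_def ..
  ultimately show False
    using DERIV_zero_imp_no_linear_decrease[OF critical \<open>\<sigma> \<in> {-1, 1}\<close> \<open>0 < c\<close> \<open>0 < \<delta>\<close>] decrease
    by (simp add: add.assoc)
qed

locale critical_clip_network =
  fixes a b :: real and h :: nat and v w \<theta> :: "nat \<Rightarrow> real" and f p :: "real \<Rightarrow> real"
  assumes v_pos: "\<And>i. i \<in> {1..h} \<Longrightarrow> 0 < v i" and w_pos: "\<And>i. i \<in> {1..h} \<Longrightarrow> 0 < w i"
    and continuous_f: "continuous_on UNIV f" and continuous_p: "continuous_on UNIV p"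
    and p_nonneg: "\<And>x. 0 \<le> p x" and p_pos_iff: "{x. 0 < p x} = {a<..<b}"
    and mono_f: "mono f"
    and Lip_f: "Lip f a b < ereal (Min ((\<lambda>i. v i * w i) ` {1..h}))"
    and critical: "\<And>k. k \<in> {1..h} \<Longrightarrow>
      ((\<lambda>t. LL a b h v w f p (\<theta>(k := t))) has_real_derivative 0) (at (\<theta> k))"
begin

definition residual :: "real \<Rightarrow> real" where
  "residual x = NN h v w \<theta> x - f x"

abbreviation I :: "nat \<Rightarrow> real set" where
  "I j \<equiv> Iint a b w \<theta> j"

abbreviation V :: real where
  "V \<equiv> Vsup a b h v w \<theta>"

definition active :: "real set" where
  "active = (\<Union>j\<in>{1..h}. I j)"

definition active_weight :: "real \<Rightarrow> real" where
  "active_weight x = (\<Sum>j\<in>{j \<in> {1..h}. x \<in> I j}. v j)"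

lemma active_subset: "active \<subseteq> {a<..<b}"
  unfolding active_def Iint_def by auto

lemma v_nonneg: "i \<in> {1..h} \<Longrightarrow> 0 \<le> v i"
  using v_pos by (simp add: less_imp_le)

lemma continuous_on_residual: "continuous_on S residual"
  unfolding residual_def using continuous_on_subset[OF continuous_f]
  by (intro continuous_intros continuous_on_NN) auto

lemma residual_has_zero:
  assumes "j \<in> {1..h}" "x \<in> I j"
  obtains z where "z \<in> I j" "residual z = 0"
proof -
  from LL_critical_imp_zero_in_Iint[OF assms(1) v_pos[OF assms(1)] w_pos[OF assms(1)]
      continuous_f continuous_p p_nonneg p_pos_iff critical[OF assms(1)] assms(2)]
  show ?thesis using that unfolding residual_def by force
qed

lemma neuron_increment_bounds:
  assumes "i \<in> {1..h}" "y\<^sub>1 \<le> y\<^sub>2"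
  shows "0 \<le> clip (w i * y\<^sub>2 + \<theta> i) - clip (w i * y\<^sub>1 + \<theta> i)
    \<and> clip (w i * y\<^sub>2 + \<theta> i) - clip (w i * y\<^sub>1 + \<theta> i) \<le> 1"
proof -
  have "w i * y\<^sub>1 \<le> w i * y\<^sub>2" using w_pos[OF assms(1)] assms(2) by simp
  then show ?thesis by (intro clip_diff_bounds) simp
qed

lemma NN_increment_ge:
  assumes "j \<in> {1..h}" "y\<^sub>1 \<in> I j" "y\<^sub>2 \<in> I j" "y\<^sub>1 \<le> y\<^sub>2"
  shows "v j * w j * (y\<^sub>2 - y\<^sub>1) \<le> NN h v w \<theta> y\<^sub>2 - NN h v w \<theta> y\<^sub>1"
proof -
  have "0 < w j" using w_pos assms(1) by auto
  then have "clip (w j * y\<^sub>2 + \<theta> j) - clip (w j * y\<^sub>1 + \<theta> j) = w j * (y\<^sub>2 - y\<^sub>1)"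
    using assms(2,3) mem_Iint_iff[where w=w and i=j] by (simp add: clip_eq_self algebra_simps)
  moreover have nonneg: "0 \<le> v i * (clip (w i * y\<^sub>2 + \<theta> i) - clip (w i * y\<^sub>1 + \<theta> i))"
    if "i \<in> {1..h}" for i
    using v_pos[OF that] neuron_increment_bounds[OF that assms(4)] by (intro mult_nonneg_nonneg) auto
  moreover have "v j * (clip (w j * y\<^sub>2 + \<theta> j) - clip (w j * y\<^sub>1 + \<theta> j))
      \<le> (\<Sum>i = 1..h. v i * (clip (w i * y\<^sub>2 + \<theta> i) - clip (w i * y\<^sub>1 + \<theta> i)))"
    by (rule member_le_sum) (use assms(1) nonneg in auto)
  ultimately show ?thesis unfolding NN_diff by (simp add: mult.assoc)
qed

lemma strict_mono_on_residual_Iint: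
  assumes "j \<in> {1..h}"
  shows "strict_mono_on (I j) residual"
proof (rule strict_mono_onI)
  fix y\<^sub>1 y\<^sub>2 assume y: "y\<^sub>1 \<in> I j" "y\<^sub>2 \<in> I j" "y\<^sub>1 < y\<^sub>2"
  then have "a \<le> y\<^sub>1" "y\<^sub>2 \<le> b" unfolding Iint_def by auto
  then have "f y\<^sub>2 - f y\<^sub>1 < Min ((\<lambda>i. v i * w i) ` {1..h}) * (y\<^sub>2 - y\<^sub>1)"
    using Lip_less_imp_diff_less[OF Lip_f] y(3) by blast
  also have "\<dots> \<le> v j * w j * (y\<^sub>2 - y\<^sub>1)"
    using assms y(3) by (intro mult_right_mono Min_le) auto
  also have "\<dots> \<le> NN h v w \<theta> y\<^sub>2 - NN h v w \<theta> y\<^sub>1"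
    using NN_increment_ge[OF assms y(1,2)] y(3) by simp
  finally show "residual y\<^sub>1 < residual y\<^sub>2" unfolding residual_def by simp
qed

lemma zero_in_overlapping_Iint:
  assumes "i \<in> {1..h}" "j \<in> {1..h}" "I i \<inter> I j \<noteq> {}" "z \<in> I j" "residual z = 0"
  shows "z \<in> I i"
proof -
  obtain z' where "z' \<in> I i" "residual z' = 0"
    using residual_has_zero[OF assms(1)] assms(3) by blast
  moreover have "inj_on residual (I i \<union> I j)"
    using strict_mono_on_Un_intervals[OF is_interval_Iint is_interval_Iint assms(3)
        strict_mono_on_residual_Iint[OF assms(1)] strict_mono_on_residual_Iint[OF assms(2)]]
    by (rule strict_mono_on_imp_inj_on)
  ultimately have "z' = z" using assms(4,5) by (metis UnI1 UnI2 inj_onD)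
  then show ?thesis using \<open>z' \<in> I i\<close> by simp
qed

lemma active_weight_le_Vsup:
  assumes "z \<in> {a<..<b}"
  shows "active_weight z \<le> V"
proof -
  have "active_weight x \<le> (\<Sum>j = 1..h. v j)" for x
    unfolding active_weight_def by (rule sum_mono2) (auto simp: v_nonneg)
  then have "bdd_above (active_weight ` {a<..<b})" by (rule bdd_aboveI2)
  moreover have "V = Sup (active_weight ` {a<..<b})" unfolding Vsup_def active_weight_def ..
  ultimately show ?thesis using assms by (simp add: cSup_upper)
qed

lemma NN_increment_le_active_weight:
  assumes "j \<in> {1..h}" "y\<^sub>1 \<in> I j" "y\<^sub>2 \<in> I j" "y\<^sub>1 \<le> y\<^sub>2" "z \<in> {y\<^sub>1, y\<^sub>2}" "residual z = 0"
  shows "NN h v w \<theta> y\<^sub>2 - NN h v w \<theta> y\<^sub>1 \<le> active_weight z"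
proof -
  have "v i * (clip (w i * y\<^sub>2 + \<theta> i) - clip (w i * y\<^sub>1 + \<theta> i)) \<le> (if z \<in> I i then v i else 0)"
    if i: "i \<in> {1..h}" for i
  proof (cases "clip (w i * y\<^sub>1 + \<theta> i) = clip (w i * y\<^sub>2 + \<theta> i)")
    case False
    then have "y\<^sub>1 < y\<^sub>2" using assms(4) by (cases "y\<^sub>1 = y\<^sub>2") auto
    moreover have "a \<le> y\<^sub>1" "y\<^sub>2 \<le> b" using assms(2,3) by (auto simp: Iint_def)
    ultimately obtain y where "y\<^sub>1 < y" "y < y\<^sub>2" "y \<in> I i"
      using clip_change_imp_Iint_between[where w=w and i=i and \<theta>=\<theta>, OF w_pos[OF i] _ _ _ False] by blast
    moreover from this have "y \<in> I j"
      using mem_is_interval_1_I[OF is_interval_Iint assms(2,3)] by simp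
    ultimately have "z \<in> I i"
      using zero_in_overlapping_Iint[OF i assms(1) _ _ assms(6)] assms(2,3,5) by blast
    then show ?thesis
      using v_pos[OF i] neuron_increment_bounds[OF i assms(4)] by (simp add: mult_left_le)
  qed (simp add: v_nonneg[OF i])
  then have "NN h v w \<theta> y\<^sub>2 - NN h v w \<theta> y\<^sub>1 \<le> (\<Sum>i = 1..h. if z \<in> I i then v i else 0)"
    unfolding NN_diff by (rule sum_mono)
  also have "\<dots> = active_weight z"
    unfolding active_weight_def by (rule sum.inter_filter[symmetric]) simp
  finally show ?thesis .
qed

lemma abs_residual_le_Vsup_on_Iint:
  assumes "j \<in> {1..h}" "x \<in> I j"
  shows "\<bar>residual x\<bar> \<le> V"
proof -
  obtain z where z: "z \<in> I j" "residual z = 0" using residual_has_zero[OF assms] .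
  then have weight: "active_weight z \<le> V"
    by (intro active_weight_le_Vsup) (auto simp: Iint_def)
  note residual_le = strict_mono_on_leD[OF strict_mono_on_residual_Iint[OF assms(1)]]
  consider "z \<le> x" | "x \<le> z" by linarith
  then show ?thesis
  proof cases
    case 1
    have "0 \<le> residual x" using residual_le[OF z(1) assms(2) 1] z(2) by simp
    moreover have "f z \<le> f x" using mono_f 1 by (rule monoD)
    then have "residual x \<le> V"
      using NN_increment_le_active_weight[OF assms(1) z(1) assms(2) 1 _ z(2)] weight z(2)
      unfolding residual_def by simp
    ultimately show ?thesis by simp
  next
    case 2
    have "residual x \<le> 0" using residual_le[OF assms(2) z(1) 2] z(2) by simp
    moreover have "f x \<le> f z" using mono_f 2 by (rule monoD)
    then have "- residual x \<le> V"
      using NN_increment_le_active_weight[OF assms(1) assms(2) z(1) 2 _ z(2)] weight z(2)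
      unfolding residual_def by simp
    ultimately show ?thesis by simp
  qed
qed

lemma abs_residual_le_Vsup_on_closure:
  assumes "x \<in> closure active"
  shows "\<bar>residual x\<bar> \<le> V"
proof -
  have "closed {x. \<bar>residual x\<bar> \<le> V}"
    by (intro closed_Collect_le continuous_intros continuous_on_residual)
  moreover have "active \<subseteq> {x. \<bar>residual x\<bar> \<le> V}"
    using abs_residual_le_Vsup_on_Iint unfolding active_def by blast
  ultimately show ?thesis using assms closure_minimal by blast
qed

lemma residual_antimono_on_gap:
  assumes "a \<le> y\<^sub>1" "y\<^sub>1 \<le> y\<^sub>2" "y\<^sub>2 \<le> b" "{y\<^sub>1<..<y\<^sub>2} \<inter> active = {}"
  shows "residual y\<^sub>2 \<le> residual y\<^sub>1"
proof -
  have unchanged: "clip (w i * y\<^sub>1 + \<theta> i) = clip (w i * y\<^sub>2 + \<theta> i)" if i: "i \<in> {1..h}" for i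
  proof (rule ccontr)
    assume changed: "clip (w i * y\<^sub>1 + \<theta> i) \<noteq> clip (w i * y\<^sub>2 + \<theta> i)"
    then have "y\<^sub>1 < y\<^sub>2" using assms(2) by (cases "y\<^sub>1 = y\<^sub>2") auto
    then obtain y where "y\<^sub>1 < y" "y < y\<^sub>2" "y \<in> I i"
      using clip_change_imp_Iint_between[where w=w and i=i and \<theta>=\<theta>,
          OF w_pos[OF i] assms(1) _ assms(3) changed] by blast
    moreover from this have "y \<in> active" unfolding active_def using i by blast
    ultimately show False using assms(4) by auto
  qed
  have "NN h v w \<theta> y\<^sub>2 - NN h v w \<theta> y\<^sub>1 = 0"
    unfolding NN_diff by (rule sum.neutral) (simp add: unchanged)
  moreover have "f y\<^sub>1 \<le> f y\<^sub>2" using mono_f assms(2) by (rule monoD)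
  ultimately show ?thesis unfolding residual_def by linarith
qed

lemma residual_le_Vsup_right_of_active:
  assumes "x \<le> b" "active \<inter> {..x} \<noteq> {}"
  shows "residual x \<le> V"
proof -
  define l where "l = Sup (active \<inter> {..x})"
  have bdd: "bdd_above (active \<inter> {..x})" by (rule bdd_aboveI[of _ x]) auto
  have "l \<le> x" unfolding l_def using assms(2) by (intro cSup_least) auto
  obtain y where y: "y \<in> active \<inter> {..x}" using assms(2) by blast
  then have "a \<le> l" using cSup_upper[OF y bdd] active_subset unfolding l_def by force
  have "l \<in> closure active"
    using closure_contains_Sup[OF assms(2) bdd] closure_mono[of "active \<inter> {..x}" active]
    unfolding l_def by blast
  moreover have "{l<..<x} \<inter> active = {}"
    using cSup_upper[OF _ bdd] unfolding l_def by fastforce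
  ultimately show ?thesis
    using residual_antimono_on_gap[OF \<open>a \<le> l\<close> \<open>l \<le> x\<close> assms(1)] abs_residual_le_Vsup_on_closure
    by fastforce
qed

lemma residual_ge_Vsup_left_of_active:
  assumes "a \<le> x" "active \<inter> {x..} \<noteq> {}"
  shows "- V \<le> residual x"
proof -
  define r where "r = Inf (active \<inter> {x..})"
  have bdd: "bdd_below (active \<inter> {x..})" by (rule bdd_belowI[of _ x]) auto
  have "x \<le> r" unfolding r_def using assms(2) by (intro cInf_greatest) auto
  obtain y where y: "y \<in> active \<inter> {x..}" using assms(2) by blast
  then have "r \<le> b" using cInf_lower[OF y bdd] active_subset unfolding r_def by force
  have "r \<in> closure active"
    using closure_contains_Inf[OF assms(2) bdd] closure_mono[of "active \<inter> {x..}" active]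
    unfolding r_def by blast
  moreover have "{x<..<r} \<inter> active = {}"
    using cInf_lower[OF _ bdd] unfolding r_def by fastforce
  ultimately show ?thesis
    using residual_antimono_on_gap[OF assms(1) \<open>x \<le> r\<close> \<open>r \<le> b\<close>] abs_residual_le_Vsup_on_closure
    by fastforce
qed

lemma abs_residual_le_Vsup_between:
  assumes "j \<in> {1..h}" "k \<in> {1..h}" "I j \<noteq> {}" "I k \<noteq> {}" "x \<in> {Sup (I j)..Inf (I k)}"
  shows "\<bar>residual x\<bar> \<le> V"
proof -
  obtain y\<^sub>j y\<^sub>k where "y\<^sub>j \<in> I j" "y\<^sub>k \<in> I k" using assms(3,4) by blast
  then have "y\<^sub>j \<in> active" "y\<^sub>k \<in> active" "y\<^sub>j \<le> x" "x \<le> y\<^sub>k"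
    using assms Iint_le_Sup Inf_le_Iint unfolding active_def by force+
  then have "active \<inter> {..x} \<noteq> {}" "active \<inter> {x..} \<noteq> {}" "a \<le> x" "x \<le> b"
    using active_subset by force+
  then have "residual x \<le> V" "- V \<le> residual x"
    using residual_le_Vsup_right_of_active residual_ge_Vsup_left_of_active by blast+
  then show ?thesis by linarith
qed

lemma abs_residual_le_right_of_Iint:
  assumes "j \<in> {1..h}" "I j \<noteq> {}" "x \<in> {Sup (I j)..b}"
  shows "\<bar>residual x\<bar> \<le> max V \<bar>residual b\<bar>"
proof -
  obtain y where "y \<in> I j" using assms(2) by blast
  then have "y \<in> active" "y \<le> x" using assms Iint_le_Sup unfolding active_def by force+
  then have "active \<inter> {..x} \<noteq> {}" "a \<le> x" "x \<le> b" using active_subset assms(3) by force+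
  moreover have "- max V \<bar>residual b\<bar> \<le> residual x"
  proof (cases "active \<inter> {x..} = {}")
    case True
    then have "{x<..<b} \<inter> active = {}" by auto
    then have "residual b \<le> residual x"
      by (rule residual_antimono_on_gap[OF \<open>a \<le> x\<close> \<open>x \<le> b\<close> order_refl])
    then show ?thesis by linarith
  next
    case False
    then show ?thesis using residual_ge_Vsup_left_of_active[OF \<open>a \<le> x\<close>] by fastforce
  qed
  ultimately show ?thesis using residual_le_Vsup_right_of_active by fastforce
qed

lemma abs_residual_le_left_of_Iint:
  assumes "j \<in> {1..h}" "I j \<noteq> {}" "x \<in> {a..Inf (I j)}"
  shows "\<bar>residual x\<bar> \<le> max V \<bar>residual a\<bar>"
proof -
  obtain y where "y \<in> I j" using assms(2) by blast
  then have "y \<in> active" "x \<le> y" using assms Inf_le_Iint unfolding active_def by force+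
  then have "active \<inter> {x..} \<noteq> {}" "a \<le> x" "x \<le> b" using active_subset assms(3) by force+
  moreover have "residual x \<le> max V \<bar>residual a\<bar>"
  proof (cases "active \<inter> {..x} = {}")
    case True
    then have "{a<..<x} \<inter> active = {}" by auto
    then have "residual x \<le> residual a"
      by (rule residual_antimono_on_gap[OF order_refl \<open>a \<le> x\<close> \<open>x \<le> b\<close>])
    then show ?thesis by linarith
  next
    case False
    then show ?thesis using residual_le_Vsup_right_of_active[OF \<open>x \<le> b\<close>] by fastforce
  qed
  ultimately show ?thesis using residual_ge_Vsup_left_of_active by fastforce
qed

end

theorem lemma2p12:
  fixes a b :: real and h :: nat and v w \<theta> :: "nat \<Rightarrow> real" and f p :: "real \<Rightarrow> real"
  assumes "a < b" and "h \<ge> 1"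
    and "\<forall>i\<in>{1..h}. v i > 0" and "\<forall>i\<in>{1..h}. w i > 0"
    and "continuous_on UNIV f" and "continuous_on UNIV p"
    and "\<forall>x. p x \<ge> 0" and "{x. p x > 0} = {a<..<b}"
    and "mono f"
    and "Lip f a b < ereal (Min ((\<lambda>i. v i * w i) ` {1..h}))"
    and "\<forall>k\<in>{1..h+1}. ((\<lambda>t. LL a b h v w f p (\<theta>(k := t))) has_real_derivative 0) (at (\<theta> k))"
  shows "(\<forall>j\<in>{1..h}. \<forall>x\<in>Iint a b w \<theta> j.
            \<bar>NN h v w \<theta> x - f x\<bar> \<le> Vsup a b h v w \<theta>)
       \<and> (\<forall>j\<in>{1..h}. \<forall>k\<in>{1..h}. Iint a b w \<theta> j \<noteq> {} \<longrightarrow> Iint a b w \<theta> k \<noteq> {} \<longrightarrow>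
            (\<forall>x\<in>{Sup (Iint a b w \<theta> j) .. Inf (Iint a b w \<theta> k)}.
               \<bar>NN h v w \<theta> x - f x\<bar> \<le> Vsup a b h v w \<theta>))
       \<and> (\<forall>j\<in>{1..h}. Iint a b w \<theta> j \<noteq> {} \<longrightarrow>
            (\<forall>x\<in>{Sup (Iint a b w \<theta> j) .. b}.
               \<bar>NN h v w \<theta> x - f x\<bar> \<le> max (Vsup a b h v w \<theta>) \<bar>f b - NN h v w \<theta> b\<bar>))
       \<and> (\<forall>j\<in>{1..h}. Iint a b w \<theta> j \<noteq> {} \<longrightarrow>
            (\<forall>x\<in>{a .. Inf (Iint a b w \<theta> j)}.
               \<bar>NN h v w \<theta> x - f x\<bar> \<le> max (Vsup a b h v w \<theta>) \<bar>f a - NN h v w \<theta> a\<bar>))"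
proof -
  interpret critical_clip_network a b h v w \<theta> f p
    using assms by unfold_locales auto
  have "\<bar>f c - NN h v w \<theta> c\<bar> = \<bar>residual c\<bar>" for c
    unfolding residual_def by simp
  then show ?thesis
    using abs_residual_le_Vsup_on_Iint abs_residual_le_Vsup_between
      abs_residual_le_right_of_Iint abs_residual_le_left_of_Iint
    unfolding residual_def by auto
qed

end
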